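(* Let $k\in\mathbb{Z}_+$ and let $A$ be the matrix defined below. Then $A^{\lfloor k/2\rfloor+1}=0$. Consequently, if $M:[0,\infty)\to\mathbb{R}^{\binom{k+d}{d}}$ satisfies $\frac{dM}{dt}=AM$ on $(0,\infty)$ and $M(0)=\lim_{t\to0^+}M(t)$, then for every $t\ge0$, $$\|M(0)\|_\infty\le\|M(t)\|_\infty\sum_{j=0}^{\lfloor k/2\rfloor}\frac{k^j(k-1)^j}{j!}\,t^j.$$
   Context: $A$ is the square matrix indexed by $\{\alpha\in\mathbb{Z}_+^d:\|\alpha\|_1\le k\}$ (where $\|\alpha\|_1=\sum_i\alpha_i$) with entries $A_{\alpha,\alpha'}=\alpha_i(\alpha_i-1)$ if $\alpha'=\alpha-2e_i$ for some $i\in\{1,\dots,d\}$ ($e_i$ the canonical basis vector of $\mathbb{Z}^d$), and $A_{\alpha,\alpha'}=0$ otherwise. $\|\cdot\|_\infty$ is the max-norm of vectors. *)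

theory Defs
  imports "HOL-Analysis.Analysis"
begin

text \<open>Multi-indices alpha in Z_+^d are represented as lists of naturals of length d
  (entry i-1 of the list is the i-th coordinate). The index set of the matrix.\<close>
definition idx :: "nat \<Rightarrow> nat \<Rightarrow> nat list set" where
  "idx d k = {\<alpha>. length \<alpha> = d \<and> sum_list \<alpha> \<le> k}"

text \<open>The matrix A: A(alpha, alpha') = alpha_i (alpha_i - 1) if alpha' = alpha - 2 e_i, else 0.
  For given alpha, alpha' at most one i can satisfy alpha' = alpha - 2 e_i, so the sum
  has at most one nonzero summand.\<close>
definition Amat :: "nat \<Rightarrow> nat list \<Rightarrow> nat list \<Rightarrow> real" where
  "Amat d \<alpha> \<alpha>' = (\<Sum>i<d. if 2 \<le> \<alpha> ! i \<and> \<alpha>' = \<alpha>[i := \<alpha> ! i - 2]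
                          then real (\<alpha> ! i) * (real (\<alpha> ! i) - 1) else 0)"

fun matpow :: "'a set \<Rightarrow> ('a \<Rightarrow> 'a \<Rightarrow> real) \<Rightarrow> nat \<Rightarrow> 'a \<Rightarrow> 'a \<Rightarrow> real" where
  "matpow I B 0 = (\<lambda>a b. if a = b then 1 else 0)"
| "matpow I B (Suc n) = (\<lambda>a b. \<Sum>c\<in>I. B a c * matpow I B n c b)"

definition supnorm :: "'a set \<Rightarrow> ('a \<Rightarrow> real) \<Rightarrow> real" where
  "supnorm I v = Max ((\<lambda>a. \<bar>v a\<bar>) ` I)"

end

theory Submission
  imports Defs
begin

text \<open>A nonzero entry A(alpha, beta) forces |beta| = |alpha| - 2, and |alpha| <= k on the index
  set, so A^(K+1) = 0 for K = k div 2. Hence F(s) = sum_{j<=K} (-s)^j/j! A^j M(s), the truncated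
  exp(-sA) M(s), has a telescoping derivative (-s)^K/K! A^(K+1) M(s) = 0, and M(0) = F(0) = F(t).
  Since A is nonnegative with row sums sum_i alpha_i (alpha_i - 1) <= (k - 1) |alpha| <= k (k - 1),
  the max-norm of A^j v is at most (k (k - 1))^j times that of v, which bounds each term of F(t).\<close>

lemma matpow_Suc_right:
  assumes "finite I" "a \<in> I" "b \<in> I"
  shows "matpow I B (Suc n) a b = (\<Sum>c\<in>I. matpow I B n a c * B c b)"
  using assms(2)
proof (induction n arbitrary: a)
  case 0
  have "(\<Sum>c\<in>I. (if a = c then 1 else 0) * B c b) = B a b"
    using assms(1) 0 by (simp add: if_distrib[where f = "\<lambda>x. x * _"] cong: if_cong)
  then show ?case using assms by (simp add: if_distrib[where f = "\<lambda>x. _ * x"] cong: if_cong)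
next
  case (Suc n)
  have "matpow I B (Suc (Suc n)) a b = (\<Sum>c\<in>I. B a c * (\<Sum>e\<in>I. matpow I B n c e * B e b))"
    using Suc.IH by simp
  also have "\<dots> = (\<Sum>c\<in>I. \<Sum>e\<in>I. B a c * matpow I B n c e * B e b)"
    by (simp add: sum_distrib_left mult.assoc)
  also have "\<dots> = (\<Sum>e\<in>I. (\<Sum>c\<in>I. B a c * matpow I B n c e) * B e b)"
    by (subst sum.swap) (simp add: sum_distrib_right)
  finally show ?case by simp
qed

lemma matpow_nonneg:
  assumes "\<And>a c. 0 \<le> B a c"
  shows "0 \<le> matpow I B n a b"
  by (induction n arbitrary: a) (auto intro!: sum_nonneg mult_nonneg_nonneg assms)

lemma matpow_row_sum_le:
  assumes fin: "finite I" and B_nonneg: "\<And>a c. 0 \<le> B a c"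
    and row_sum: "\<And>a. a \<in> I \<Longrightarrow> (\<Sum>c\<in>I. B a c) \<le> R" and a: "a \<in> I"
  shows "(\<Sum>b\<in>I. matpow I B n a b) \<le> R ^ n"
  using a
proof (induction n arbitrary: a)
  case 0
  then show ?case using fin by simp
next
  case (Suc n)
  have R_nonneg: "0 \<le> R"
    using row_sum[OF Suc.prems] sum_nonneg[of I "B a"] B_nonneg by (meson order_trans)
  have "(\<Sum>b\<in>I. matpow I B (Suc n) a b) = (\<Sum>b\<in>I. \<Sum>c\<in>I. B a c * matpow I B n c b)"
    by simp
  also have "\<dots> = (\<Sum>c\<in>I. B a c * (\<Sum>b\<in>I. matpow I B n c b))"
    by (subst sum.swap) (simp add: sum_distrib_left)
  also have "\<dots> \<le> (\<Sum>c\<in>I. B a c * R ^ n)"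
    using Suc.IH by (intro sum_mono mult_left_mono B_nonneg) auto
  also have "\<dots> \<le> R * R ^ n"
    using row_sum[OF Suc.prems] R_nonneg by (simp add: sum_distrib_right[symmetric] mult_right_mono)
  finally show ?case by simp
qed

lemma abs_matpow_apply_le:
  assumes fin: "finite I" and B_nonneg: "\<And>a c. 0 \<le> B a c"
    and row_sum: "\<And>a. a \<in> I \<Longrightarrow> (\<Sum>c\<in>I. B a c) \<le> R" and a: "a \<in> I"
  shows "\<bar>\<Sum>b\<in>I. matpow I B n a b * v b\<bar> \<le> R ^ n * supnorm I v"
proof -
  have v_le: "\<bar>v b\<bar> \<le> supnorm I v" if "b \<in> I" for b
    unfolding supnorm_def using fin that by (intro Max_ge) auto
  then have "0 \<le> supnorm I v" using a by force
  have "\<bar>\<Sum>b\<in>I. matpow I B n a b * v b\<bar> \<le> (\<Sum>b\<in>I. matpow I B n a b * supnorm I v)"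
    using v_le matpow_nonneg[of B, OF B_nonneg]
    by (intro order_trans[OF sum_abs] sum_mono) (auto simp: abs_mult intro: mult_left_mono)
  also have "\<dots> \<le> R ^ n * supnorm I v"
    using matpow_row_sum_le[OF assms] \<open>0 \<le> supnorm I v\<close>
    by (simp add: sum_distrib_right[symmetric] mult_right_mono)
  finally show ?thesis .
qed

lemma matpow_eq_0_of_grading:
  assumes descent: "\<And>a c. a \<in> I \<Longrightarrow> c \<in> I \<Longrightarrow> B a c \<noteq> 0 \<Longrightarrow> g c + s \<le> g a"
    and a: "a \<in> I" and bound: "g a < s * n"
  shows "matpow I B n a b = 0"
proof -
  have "g b + s * n \<le> g a" if "a \<in> I" "matpow I B n a b \<noteq> 0" for a
    using that
  proof (induction n arbitrary: a)
    case (Suc n)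
    then obtain c where "c \<in> I" "B a c \<noteq> 0" "matpow I B n c b \<noteq> 0"
      by (auto elim: sum.not_neutral_contains_not_neutral)
    with Suc.IH descent[OF Suc.prems(1)] show ?case by fastforce
  qed (auto split: if_splits)
  with a bound show ?thesis by fastforce
qed

lemma eq_at_0_if_deriv_zero_on_pos:
  fixes f :: "real \<Rightarrow> real"
  assumes deriv: "\<And>s. s > 0 \<Longrightarrow> (f has_real_derivative 0) (at s)"
    and lim: "(f \<longlongrightarrow> f 0) (at_right 0)" and t: "t \<ge> 0"
  shows "f t = f 0"
proof -
  obtain c where c: "\<And>s. s > 0 \<Longrightarrow> f s = c"
    using has_field_derivative_zero_constant[of "{0<..}" f] deriv
    by (auto simp: at_within_open[of _ "{0<..}"])
  have "((\<lambda>_. c) \<longlongrightarrow> f 0) (at_right (0::real))"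
  proof -
    have "eventually (\<lambda>s. f s = c) (at_right 0)"
      by (rule eventually_at_rightI[of 0 1]) (auto simp: c)
    with lim show ?thesis by (simp add: tendsto_cong)
  qed
  then have "f 0 = c" by (simp add: tendsto_const_iff)
  with c t show ?thesis by (cases "t = 0") auto
qed

lemma sum_atMost_telescope_shift:
  fixes c G :: "nat \<Rightarrow> 'a :: comm_ring"
  shows "(\<Sum>j\<le>n. (if j = 0 then 0 else - c (j - 1)) * G j + G (Suc j) * c j) = c n * G (Suc n)"
  by (induction n) (auto simp: mult.commute)

lemma has_real_derivative_neg_power_div_fact:
  "((\<lambda>s. (-s) ^ j / fact j) has_real_derivative
     (if j = 0 then 0 else - ((-x) ^ (j - 1) / fact (j - 1)))) (at x)"
proof (cases j)
  case 0
  then show ?thesis by simp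
next
  case (Suc m)
  have "((\<lambda>s. (-s) ^ Suc m / fact (Suc m)) has_real_derivative
      real (Suc m) * (-x) ^ m * (-1) / fact (Suc m)) (at x)"
    by (intro derivative_eq_intros) auto
  also have "real (Suc m) * (-x) ^ m * (-1) / fact (Suc m) = - ((-x) ^ m / fact m)"
    unfolding fact_Suc of_nat_mult mult.assoc
    by (subst nonzero_mult_divide_mult_cancel_left) auto
  finally show ?thesis
    using Suc by simp
qed

lemma matpow_apply_has_real_derivative:
  fixes M :: "real \<Rightarrow> 'a \<Rightarrow> real"
  assumes fin: "finite I" and a: "a \<in> I"
    and M': "\<And>b. b \<in> I \<Longrightarrow> ((\<lambda>s. M s b) has_real_derivative (\<Sum>c\<in>I. B b c * M t c)) (at t)"
  shows "((\<lambda>s. \<Sum>b\<in>I. matpow I B j a b * M s b) has_real_derivative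
           (\<Sum>c\<in>I. matpow I B (Suc j) a c * M t c)) (at t)"
proof -
  have "((\<lambda>s. \<Sum>b\<in>I. matpow I B j a b * M s b) has_real_derivative
      (\<Sum>b\<in>I. matpow I B j a b * (\<Sum>c\<in>I. B b c * M t c))) (at t)"
    using M' by (intro DERIV_sum DERIV_cmult) auto
  also have "(\<Sum>b\<in>I. matpow I B j a b * (\<Sum>c\<in>I. B b c * M t c))
      = (\<Sum>c\<in>I. \<Sum>b\<in>I. matpow I B j a b * B b c * M t c)"
    by (subst sum.swap) (simp add: sum_distrib_left mult.assoc)
  also have "\<dots> = (\<Sum>c\<in>I. matpow I B (Suc j) a c * M t c)"
    using fin a
    by (intro sum.cong refl) (simp add: matpow_Suc_right sum_distrib_right del: matpow.simps(2))
  finally show ?thesis .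
qed

lemma nilpotent_linear_ode_initial_value:
  fixes M :: "real \<Rightarrow> 'a \<Rightarrow> real"
  assumes fin: "finite I"
    and nilpotent: "\<And>a b. a \<in> I \<Longrightarrow> b \<in> I \<Longrightarrow> matpow I B (Suc K) a b = 0"
    and ode: "\<And>a t. a \<in> I \<Longrightarrow> t > 0 \<Longrightarrow>
               ((\<lambda>s. M s a) has_real_derivative (\<Sum>b\<in>I. B a b * M t b)) (at t)"
    and init: "\<And>a. a \<in> I \<Longrightarrow> ((\<lambda>s. M s a) \<longlongrightarrow> M 0 a) (at_right 0)"
    and a: "a \<in> I" and t: "t \<ge> 0"
  shows "M 0 a = (\<Sum>j\<le>K. (-t) ^ j / fact j * (\<Sum>b\<in>I. matpow I B j a b * M t b))"
proof -
  define G where "G j s = (\<Sum>b\<in>I. matpow I B j a b * M s b)" for j s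
  define c where "c j s = (-s) ^ j / fact j" for j :: nat and s :: real
  define F where "F s = (\<Sum>j\<le>K. c j s * G j s)" for s
  have c': "((\<lambda>s. c j s) has_real_derivative (if j = 0 then 0 else - c (j - 1) s)) (at s)"
    for j s
    unfolding c_def by (rule has_real_derivative_neg_power_div_fact)
  have F': "(F has_real_derivative 0) (at s)" if "s > 0" for s
  proof -
    have "(\<Sum>j\<le>K. (if j = 0 then 0 else - c (j - 1) s) * G j s + G (Suc j) s * c j s)
        = c K s * G (Suc K) s"
      by (rule sum_atMost_telescope_shift)
    also have "G (Suc K) s = 0"
      using nilpotent a by (simp add: G_def)
    finally have telescope:
      "(\<Sum>j\<le>K. (if j = 0 then 0 else - c (j - 1) s) * G j s + G (Suc j) s * c j s) = 0"
      by simp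
    have "(F has_real_derivative
        (\<Sum>j\<le>K. (if j = 0 then 0 else - c (j - 1) s) * G j s + G (Suc j) s * c j s)) (at s)"
      unfolding F_def G_def using ode that fin a
      by (intro DERIV_sum DERIV_mult c' matpow_apply_has_real_derivative) auto
    with telescope show ?thesis by simp
  qed
  have "((\<lambda>s. - s) \<longlongrightarrow> 0) (at_right (0::real))"
    using tendsto_minus[OF tendsto_ident_at[of "0::real" "{0<..}"]] by simp
  then have "(F \<longlongrightarrow> F 0) (at_right 0)"
    unfolding F_def G_def c_def using init by (auto intro!: tendsto_intros)
  with F' t have "F t = F 0"
    by (intro eq_at_0_if_deriv_zero_on_pos)
  also have "F 0 = (\<Sum>j\<le>K. if j = 0 then G 0 0 else 0)"
    unfolding F_def c_def by (intro sum.cong) auto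
  also have "\<dots> = M 0 a"
    using fin a by (simp add: G_def if_distrib[where f = "\<lambda>x. x * _"] cong: if_cong)
  finally show ?thesis by (simp add: F_def G_def c_def)
qed

lemma nilpotent_linear_ode_supnorm_le:
  fixes M :: "real \<Rightarrow> 'a \<Rightarrow> real"
  assumes fin: "finite I" and nonempty: "I \<noteq> {}"
    and B_nonneg: "\<And>a c. 0 \<le> B a c"
    and row_sum: "\<And>a. a \<in> I \<Longrightarrow> (\<Sum>c\<in>I. B a c) \<le> R"
    and nilpotent: "\<And>a b. a \<in> I \<Longrightarrow> b \<in> I \<Longrightarrow> matpow I B (Suc K) a b = 0"
    and ode: "\<And>a t. a \<in> I \<Longrightarrow> t > 0 \<Longrightarrow>
               ((\<lambda>s. M s a) has_real_derivative (\<Sum>b\<in>I. B a b * M t b)) (at t)"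
    and init: "\<And>a. a \<in> I \<Longrightarrow> ((\<lambda>s. M s a) \<longlongrightarrow> M 0 a) (at_right 0)"
    and t: "t \<ge> 0"
  shows "supnorm I (M 0) \<le> supnorm I (M t) * (\<Sum>j\<le>K. R ^ j / fact j * t ^ j)"
proof -
  have "\<bar>M 0 a\<bar> \<le> supnorm I (M t) * (\<Sum>j\<le>K. R ^ j / fact j * t ^ j)" if a: "a \<in> I" for a
  proof -
    have "M 0 a = (\<Sum>j\<le>K. (-t) ^ j / fact j * (\<Sum>b\<in>I. matpow I B j a b * M t b))"
      using fin nilpotent ode init a t by (rule nilpotent_linear_ode_initial_value)
    then have "\<bar>M 0 a\<bar> \<le> (\<Sum>j\<le>K. \<bar>(-t) ^ j / fact j * (\<Sum>b\<in>I. matpow I B j a b * M t b)\<bar>)"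
      by (simp only: sum_abs)
    also have "\<dots> \<le> (\<Sum>j\<le>K. t ^ j / fact j * (R ^ j * supnorm I (M t)))"
    proof (rule sum_mono)
      fix j
      have "\<bar>\<Sum>b\<in>I. matpow I B j a b * M t b\<bar> \<le> R ^ j * supnorm I (M t)"
        using fin B_nonneg row_sum a by (rule abs_matpow_apply_le)
      then show "\<bar>(-t) ^ j / fact j * (\<Sum>b\<in>I. matpow I B j a b * M t b)\<bar>
          \<le> t ^ j / fact j * (R ^ j * supnorm I (M t))"
        using t by (simp add: abs_mult power_abs divide_right_mono mult_left_mono)
    qed
    also have "\<dots> = supnorm I (M t) * (\<Sum>j\<le>K. R ^ j / fact j * t ^ j)"
      by (simp add: sum_distrib_left mult_ac)
    finally show ?thesis .
  qed
  then show ?thesis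
    unfolding supnorm_def[of I "M 0"] using fin nonempty by (subst Max_le_iff) auto
qed

lemma finite_idx: "finite (idx d k)"
proof -
  have "idx d k \<subseteq> {xs. set xs \<subseteq> {..k} \<and> length xs = d}"
    using member_le_sum_list by (fastforce simp: idx_def)
  then show ?thesis
    using finite_lists_length_eq[of "{..k}" d] finite_subset by blast
qed

lemma idx_nonempty: "idx d k \<noteq> {}"
proof -
  have "replicate d 0 \<in> idx d k"
    by (simp add: idx_def sum_list_replicate)
  then show ?thesis by blast
qed

lemma Amat_nonneg: "0 \<le> Amat d \<alpha> \<beta>"
  unfolding Amat_def by (intro sum_nonneg) auto

lemma Amat_nonzero_sum_list:
  assumes \<alpha>: "\<alpha> \<in> idx d k" and nonzero: "Amat d \<alpha> \<beta> \<noteq> 0"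
  shows "sum_list \<beta> + 2 \<le> sum_list \<alpha>"
proof -
  obtain i where i: "i < d" "2 \<le> \<alpha> ! i" "\<beta> = \<alpha>[i := \<alpha> ! i - 2]"
    using nonzero unfolding Amat_def
    by (auto elim: sum.not_neutral_contains_not_neutral split: if_splits)
  moreover have "length \<alpha> = d"
    using \<alpha> by (simp add: idx_def)
  ultimately show ?thesis
    using elem_le_sum_list[of i \<alpha>] by (simp add: sum_list_update)
qed

lemma Amat_nilpotent:
  assumes "\<alpha> \<in> idx d k"
  shows "matpow (idx d k) (Amat d) (k div 2 + 1) \<alpha> \<beta> = 0"
proof (rule matpow_eq_0_of_grading[where g = sum_list and s = 2])
  have "k < 2 * (k div 2 + 1)"
    by presburger
  then show "sum_list \<alpha> < 2 * (k div 2 + 1)"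
    using assms by (simp add: idx_def)
qed (use assms Amat_nonzero_sum_list in auto)

lemma Amat_row_sum_le:
  assumes \<alpha>: "\<alpha> \<in> idx d k"
  shows "(\<Sum>\<beta>\<in>idx d k. Amat d \<alpha> \<beta>) \<le> real k * (real k - 1)"
proof -
  let ?w = "\<lambda>i. real (\<alpha> ! i) * (real (\<alpha> ! i) - 1)"
  have len: "length \<alpha> = d" and sum_le: "sum_list \<alpha> \<le> k"
    using \<alpha> by (auto simp: idx_def)
  have coordinate_term_le: "(\<Sum>\<beta>\<in>idx d k. if 2 \<le> \<alpha> ! i \<and> \<beta> = \<alpha>[i := \<alpha> ! i - 2] then ?w i else 0)
      \<le> real (\<alpha> ! i) * (real k - 1)" if "i < d" for i
  proof -
    have "0 \<le> ?w i"
      by (cases "\<alpha> ! i") auto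
    have "(\<Sum>\<beta>\<in>idx d k. if 2 \<le> \<alpha> ! i \<and> \<beta> = \<alpha>[i := \<alpha> ! i - 2] then ?w i else 0)
        = (\<Sum>\<beta>\<in>idx d k. if \<beta> = \<alpha>[i := \<alpha> ! i - 2] then (if 2 \<le> \<alpha> ! i then ?w i else 0) else 0)"
      by (intro sum.cong) auto
    also have "\<dots> \<le> ?w i"
      using finite_idx \<open>0 \<le> ?w i\<close> by (simp add: sum.delta')
    also have "\<dots> \<le> real (\<alpha> ! i) * (real k - 1)"
      using elem_le_sum_list[of i \<alpha>] that len sum_le by (intro mult_left_mono) auto
    finally show ?thesis .
  qed
  have "(\<Sum>\<beta>\<in>idx d k. Amat d \<alpha> \<beta>)
      = (\<Sum>i<d. \<Sum>\<beta>\<in>idx d k. if 2 \<le> \<alpha> ! i \<and> \<beta> = \<alpha>[i := \<alpha> ! i - 2] then ?w i else 0)"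
    unfolding Amat_def by (rule sum.swap)
  also have "\<dots> \<le> (\<Sum>i<d. real (\<alpha> ! i) * (real k - 1))"
    using coordinate_term_le by (intro sum_mono) auto
  also have "\<dots> = real (sum_list \<alpha>) * (real k - 1)"
    using len by (simp add: sum_list_sum_nth atLeast0LessThan sum_distrib_right)
  also have "\<dots> \<le> real k * (real k - 1)"
    using sum_le by (cases "k = 0") (auto intro: mult_right_mono)
  finally show ?thesis .
qed

theorem mainTheorem4:
  fixes d k :: nat
  shows "(\<forall>\<alpha>\<in>idx d k. \<forall>\<beta>\<in>idx d k. matpow (idx d k) (Amat d) (k div 2 + 1) \<alpha> \<beta> = 0)
    \<and> (\<forall>M :: real \<Rightarrow> nat list \<Rightarrow> real.
         (\<forall>\<alpha>\<in>idx d k. \<forall>t>0. ((\<lambda>s. M s \<alpha>) has_real_derivative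
              (\<Sum>\<alpha>'\<in>idx d k. Amat d \<alpha> \<alpha>' * M t \<alpha>')) (at t))
       \<and> (\<forall>\<alpha>\<in>idx d k. ((\<lambda>s. M s \<alpha>) \<longlongrightarrow> M 0 \<alpha>) (at_right 0))
       \<longrightarrow> (\<forall>t\<ge>0. supnorm (idx d k) (M 0)
              \<le> supnorm (idx d k) (M t) *
                (\<Sum>j\<le>k div 2. (real k) ^ j * (real k - 1) ^ j / fact j * t ^ j)))"
proof (intro conjI allI impI ballI)
  fix \<alpha> \<beta> assume "\<alpha> \<in> idx d k"
  then show "matpow (idx d k) (Amat d) (k div 2 + 1) \<alpha> \<beta> = 0"
    by (rule Amat_nilpotent)
next
  fix M :: "real \<Rightarrow> nat list \<Rightarrow> real" and t :: real
  assume M: "(\<forall>\<alpha>\<in>idx d k. \<forall>t>0. ((\<lambda>s. M s \<alpha>) has_real_derivative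
              (\<Sum>\<alpha>'\<in>idx d k. Amat d \<alpha> \<alpha>' * M t \<alpha>')) (at t))
       \<and> (\<forall>\<alpha>\<in>idx d k. ((\<lambda>s. M s \<alpha>) \<longlongrightarrow> M 0 \<alpha>) (at_right 0))"
    and t: "t \<ge> 0"
  have nilpotent: "matpow (idx d k) (Amat d) (Suc (k div 2)) \<alpha> \<beta> = 0"
    if "\<alpha> \<in> idx d k" for \<alpha> \<beta>
    using Amat_nilpotent[OF that] by simp
  have ode: "((\<lambda>s. M s \<alpha>) has_real_derivative (\<Sum>\<beta>\<in>idx d k. Amat d \<alpha> \<beta> * M s' \<beta>)) (at s')"
    if "\<alpha> \<in> idx d k" "s' > 0" for \<alpha> s'
    using M[THEN conjunct1, rule_format, OF that] .
  have init: "((\<lambda>s. M s \<alpha>) \<longlongrightarrow> M 0 \<alpha>) (at_right 0)" if "\<alpha> \<in> idx d k" for \<alpha>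
    using M[THEN conjunct2, rule_format, OF that] .
  have "supnorm (idx d k) (M 0)
      \<le> supnorm (idx d k) (M t) * (\<Sum>j\<le>k div 2. (real k * (real k - 1)) ^ j / fact j * t ^ j)"
    by (rule nilpotent_linear_ode_supnorm_le[where B = "Amat d" and R = "real k * (real k - 1)",
          OF finite_idx idx_nonempty Amat_nonneg Amat_row_sum_le nilpotent ode init t])
  then show "supnorm (idx d k) (M 0)
      \<le> supnorm (idx d k) (M t) * (\<Sum>j\<le>k div 2. (real k) ^ j * (real k - 1) ^ j / fact j * t ^ j)"
    by (simp add: power_mult_distrib)
qed

end
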